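(* Let $x_{00},x_{10},x_{11},x_{01}\in\mathbb{RP}^3$ be a planar quadrilateral with Laplace points $y^1$ (intersection of lines $x_{00}x_{10}$ and $x_{01}x_{11}$) and $y^2$ (intersection of lines $x_{00}x_{01}$ and $x_{10}x_{11}$), and let $N\ge2$ be an integer. Let $p_0,p_1,q_0,q_1:\{0,\dots,N\}\to\mathbb{RP}^3$ be polylines with $p_j(iN)=q_i(jN)=x_{ij}$ for $i,j\in\{0,1\}$, such that $p_0(k),p_1(k),y^2$ are collinear for all $k$ and $q_0(\ell),q_1(\ell),y^1$ are collinear for all $\ell$. Then there exists a unique multi-Q-net $f:\{0,\dots,N\}^2\to\mathbb{RP}^3$ with $f(k,jN)=p_j(k)$ for all $k\in\{0,\dots,N\}$, $j\in\{0,1\}$, and $f(iN,\ell)=q_i(\ell)$ for all $\ell\in\{0,\dots,N\}$, $i\in\{0,1\}$.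
   Context: A multi-Q-net on $\{0,\dots,N\}^2$ is a map $f$ to $\mathbb{RP}^3$ such that for all $i_0\ne i_1$, $j_0\ne j_1$ the points $f(i_0,j_0),f(i_0,j_1),f(i_1,j_1),f(i_1,j_0)$ are coplanar. Data are assumed in general position. *)

theory Defs
  imports "HOL-Analysis.Analysis"
begin

typedef rp3 = "{L :: (real^4) set. \<exists>v. v \<noteq> 0 \<and> L = span {v}}"
  morphisms ppoint_space Abs_rp3
  by (rule exI[of _ "span {axis 1 (1::real)}"], rule CollectI, rule exI[of _ "axis 1 (1::real)"]) (simp add: axis_eq_0_iff)

definition psp :: "rp3 set \<Rightarrow> (real^4) set" where
  "psp S = span (\<Union> (ppoint_space ` S))"

definition coplanar4 :: "rp3 \<Rightarrow> rp3 \<Rightarrow> rp3 \<Rightarrow> rp3 \<Rightarrow> bool" where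
  "coplanar4 a b c d \<longleftrightarrow> dim (psp {a, b, c, d}) \<le> 3"

definition collinear3 :: "rp3 \<Rightarrow> rp3 \<Rightarrow> rp3 \<Rightarrow> bool" where
  "collinear3 a b c \<longleftrightarrow> dim (psp {a, b, c}) \<le> 2"

definition on_line :: "rp3 \<Rightarrow> rp3 \<Rightarrow> rp3 \<Rightarrow> bool" where
  "on_line y a b \<longleftrightarrow> ppoint_space y \<subseteq> psp {a, b}"

definition multi_Q_net :: "nat \<Rightarrow> (nat \<Rightarrow> nat \<Rightarrow> rp3) \<Rightarrow> bool" where
  "multi_Q_net N f \<longleftrightarrow>
     (\<forall>i0 i1 j0 j1. i0 \<le> N \<and> i1 \<le> N \<and> j0 \<le> N \<and> j1 \<le> N \<and> i0 \<noteq> i1 \<and> j0 \<noteq> j1 \<longrightarrow>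
        coplanar4 (f i0 j0) (f i0 j1) (f i1 j1) (f i1 j0))"

definition quad_nondegenerate :: "rp3 \<Rightarrow> rp3 \<Rightarrow> rp3 \<Rightarrow> rp3 \<Rightarrow> bool" where
  "quad_nondegenerate x00 x10 x11 x01 \<longleftrightarrow>
     \<not> collinear3 x00 x10 x11 \<and> \<not> collinear3 x10 x11 x01 \<and>
     \<not> collinear3 x11 x01 x00 \<and> \<not> collinear3 x01 x00 x10"

definition gen_pos_data ::
  "nat \<Rightarrow> rp3 \<Rightarrow> rp3 \<Rightarrow> rp3 \<Rightarrow> rp3 \<Rightarrow> (nat \<Rightarrow> rp3) \<Rightarrow> (nat \<Rightarrow> rp3) \<Rightarrow> (nat \<Rightarrow> rp3) \<Rightarrow> (nat \<Rightarrow> rp3) \<Rightarrow> bool"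
  where
  "gen_pos_data N x00 x10 x11 x01 p0 p1 q0 q1 \<longleftrightarrow>
     quad_nondegenerate x00 x10 x11 x01 \<and>
     (\<forall>k l. 0 < k \<and> k < N \<and> 0 < l \<and> l < N \<longrightarrow>
        dim (psp {p0 k, x00, q0 l}) = 3 \<and>
        dim (psp {p1 k, x01, q0 l}) = 3 \<and>
        dim (psp {p0 k, x10, q1 l}) = 3 \<and>
        dim (psp {p1 k, x11, q1 l}) = 3 \<and>
        dim (psp {p0 k, x00, q0 l} \<inter> psp {p1 k, x01, q0 l} \<inter>
             psp {p0 k, x10, q1 l} \<inter> psp {p1 k, x11, q1 l}) \<le> 1)"

end

theory Submission
  imports Defs
begin

text \<open>Represent the vertices by U, U + Y1, U + Y2, U + Y1 + Y2 with Y1, Y2 over the Laplace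
  points. Collinearity of p0 k, p1 k, y2 lets one represent them by a_k and a_k + Y2, and
  likewise q0 l, q1 l by U + b_l and U + Y1 + b_l. The vectors F(k,l) = a_k + b_l then satisfy
  F(i0,j0) - F(i0,j1) + F(i1,j1) - F(i1,j0) = 0 on every rectangle, which is coplanarity, and
  have the prescribed boundary. Conversely, in any multi-Q-net an interior point lies on the four
  planes through it and three boundary points; in general position these meet in one point.\<close>

definition rep :: "rp3 \<Rightarrow> real^4" where
  "rep x = (SOME v. v \<noteq> 0 \<and> ppoint_space x = span {v})"

lemma rep_nonzero: "rep x \<noteq> 0"
  and ppoint_space_eq_span_rep: "ppoint_space x = span {rep x}"
proof -
  have "\<exists>v. v \<noteq> 0 \<and> ppoint_space x = span {v}" using ppoint_space[of x] by auto
  then have "rep x \<noteq> 0 \<and> ppoint_space x = span {rep x}"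
    unfolding rep_def by (rule someI_ex)
  then show "rep x \<noteq> 0" "ppoint_space x = span {rep x}" by auto
qed

lemma rep_in_ppoint_space: "rep x \<in> ppoint_space x"
  by (simp add: ppoint_space_eq_span_rep span_base)

lemma scaleR_in_ppoint_space: "v \<in> ppoint_space x \<Longrightarrow> c *\<^sub>R v \<in> ppoint_space x"
  by (simp add: ppoint_space_eq_span_rep span_scale)

lemma zero_in_ppoint_space: "0 \<in> ppoint_space x"
  by (simp add: ppoint_space_eq_span_rep span_zero)

lemma psp_eq_span_rep: "psp S = span (rep ` S)"
proof -
  have "\<Union> (ppoint_space ` S) \<subseteq> span (rep ` S)"
    using span_mono[of "{rep x}" "rep ` S" for x] by (auto simp: ppoint_space_eq_span_rep)
  moreover have "rep ` S \<subseteq> \<Union> (ppoint_space ` S)"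
    using rep_in_ppoint_space by blast
  ultimately show ?thesis
    unfolding psp_def by (metis span_mono span_span subset_antisym)
qed

lemma in_psp: "v \<in> ppoint_space x \<Longrightarrow> x \<in> S \<Longrightarrow> v \<in> psp S"
  unfolding psp_def by (auto intro: span_base)

lemma ppoint_space_eq_span:
  assumes "v \<noteq> 0" "v \<in> ppoint_space x"
  shows "ppoint_space x = span {v}"
proof -
  obtain c where c: "v = c *\<^sub>R rep x"
    using assms(2) by (auto simp: ppoint_space_eq_span_rep span_singleton)
  with assms(1) have "rep x = (1 / c) *\<^sub>R v" by auto
  then have "rep x \<in> span {v}" by (simp add: span_base span_scale)
  moreover have "v \<in> span {rep x}" using assms(2) by (simp add: ppoint_space_eq_span_rep)
  ultimately show ?thesis
    by (simp add: ppoint_space_eq_span_rep span_eq)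
qed

lemma rp3_eqI: "v \<noteq> 0 \<Longrightarrow> v \<in> ppoint_space x \<Longrightarrow> v \<in> ppoint_space y \<Longrightarrow> x = y"
  by (metis ppoint_space_eq_span ppoint_space_inject)

lemma rep_in_psp:
  assumes "v \<noteq> 0" "v \<in> ppoint_space x" "v \<in> psp S"
  shows "rep x \<in> psp S"
proof -
  obtain c where "rep x = c *\<^sub>R v"
    using ppoint_space_eq_span[OF assms(1,2)] rep_in_ppoint_space[of x] by (auto simp: span_singleton)
  then show ?thesis using assms(3) unfolding psp_def by (simp add: span_scale)
qed

definition point_of :: "real^4 \<Rightarrow> rp3" where
  "point_of v = Abs_rp3 (span {v})"

lemma ppoint_space_point_of: "v \<noteq> 0 \<Longrightarrow> ppoint_space (point_of v) = span {v}"
  unfolding point_of_def by (rule Abs_rp3_inverse) auto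

lemma point_of_rep: "point_of (rep x) = x"
  unfolding point_of_def ppoint_space_eq_span_rep[of x, symmetric] by (rule ppoint_space_inverse)

lemma independent_reps:
  assumes "x \<noteq> y"
  shows "independent {rep x, rep y}" "rep x \<noteq> rep y"
proof -
  have "rep y \<notin> span {rep x}"
    using rp3_eqI[OF rep_nonzero _ rep_in_ppoint_space, of y x] assms
    by (auto simp: ppoint_space_eq_span_rep)
  moreover have "independent {rep x}" using rep_nonzero[of x] by simp
  ultimately have "independent (insert (rep y) {rep x})" by (rule independent_insertI)
  then show "independent {rep x, rep y}" by (simp add: insert_commute)
  show "rep x \<noteq> rep y" using \<open>rep y \<notin> span {rep x}\<close> by (auto simp: span_base)
qed

lemma dim_two_le: "dim {a, b :: 'a::euclidean_space} \<le> 2"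
proof -
  have "dim {a, b} \<le> card {a, b}" by (rule dim_le_card) (auto intro: span_base)
  also have "\<dots> \<le> 2" using card_length[of "[a, b]"] by simp
  finally show ?thesis .
qed

lemma dim_three_le: "dim {a, b, c :: 'a::euclidean_space} \<le> 3"
proof -
  have "dim {a, b, c} \<le> card {a, b, c}" by (rule dim_le_card) (auto intro: span_base)
  also have "\<dots> \<le> 3" using card_length[of "[a, b, c]"] by simp
  finally show ?thesis .
qed

lemma eq_scaleR_if_add_eq_0:
  fixes a w :: "'a::real_vector"
  assumes "x \<noteq> 0" "x *\<^sub>R a + w = 0"
  shows "a = (- 1 / x) *\<^sub>R w"
proof -
  have "x *\<^sub>R a = - w" using assms(2) by (simp add: eq_neg_iff_add_eq_0)
  then have "(1 / x) *\<^sub>R (x *\<^sub>R a) = (1 / x) *\<^sub>R (- w)" by simp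
  then show ?thesis using assms(1) by simp
qed

lemma dim_span_three_le2_if_mem:
  assumes "a \<in> span {b, c :: 'a::euclidean_space}"
  shows "dim (span {a, b, c}) \<le> 2"
proof -
  have "dim (span {a, b, c}) = dim {b, c}" using span_redundant[OF assms] by (metis dim_span)
  then show ?thesis using dim_two_le by simp
qed

lemma span_pair_E:
  assumes "v \<in> span {a, b :: 'a::real_vector}"
  obtains s t where "v = s *\<^sub>R a + t *\<^sub>R b"
  using assms by (auto simp: span_breakdown_eq span_singleton algebra_simps)

lemma lincomb_three_first_coeff_zero:
  assumes "\<not> dim (span {a, b, c :: 'a::euclidean_space}) \<le> 2"
    and "x *\<^sub>R a + y *\<^sub>R b + z *\<^sub>R c = 0"
  shows "x = 0"
proof (rule ccontr)
  assume "x \<noteq> 0"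
  then have "a = (- 1 / x) *\<^sub>R (y *\<^sub>R b + z *\<^sub>R c)"
    by (rule eq_scaleR_if_add_eq_0) (use assms(2) in \<open>simp add: algebra_simps\<close>)
  then have "a \<in> span {b, c}" by (simp add: span_add span_base span_scale span_neg)
  then show False using assms(1) dim_span_three_le2_if_mem by blast
qed

lemma span_pair_inter:
  assumes "\<not> dim (span {a, b, c :: 'a::euclidean_space}) \<le> 2"
    and "v \<in> span {a, c}" "v \<in> span {b, c}"
  shows "v \<in> span {c}"
proof -
  obtain s t where st: "v = s *\<^sub>R a + t *\<^sub>R c" using assms(2) by (rule span_pair_E)
  obtain s' t' where st': "v = s' *\<^sub>R b + t' *\<^sub>R c" using assms(3) by (rule span_pair_E)
  have "s *\<^sub>R a + (- s') *\<^sub>R b + (t - t') *\<^sub>R c = 0"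
    using st st' by (simp add: algebra_simps)
  then have "s = 0" by (rule lincomb_three_first_coeff_zero[OF assms(1)])
  then show ?thesis using st by (simp add: span_base span_scale)
qed

lemma span_pair_first_coeff_nonzero:
  assumes "w \<in> span {a, b :: 'a::real_vector}" "w \<noteq> 0" "w \<in> S" "subspace S" "b \<notin> S"
  obtains \<alpha> \<beta> where "w = \<alpha> *\<^sub>R a + \<beta> *\<^sub>R b" "\<alpha> \<noteq> 0"
proof -
  obtain \<alpha> \<beta> where w: "w = \<alpha> *\<^sub>R a + \<beta> *\<^sub>R b" using assms(1) by (rule span_pair_E)
  have "\<alpha> \<noteq> 0"
  proof
    assume "\<alpha> = 0"
    with w assms(2) have "b = (1 / \<beta>) *\<^sub>R w" by auto
    then show False using assms(3-5) by (simp add: subspace_scale)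
  qed
  with w show ?thesis by (rule that)
qed

lemma collinear3_rep_in_span:
  assumes "collinear3 a b c" "a \<noteq> c"
  shows "rep b \<in> span {rep a, rep c}"
proof (rule ccontr)
  assume b: "rep b \<notin> span {rep a, rep c}"
  then have "independent (insert (rep b) {rep a, rep c})"
    using independent_reps(1)[OF assms(2)] by (rule independent_insertI)
  moreover have "rep b \<notin> {rep a, rep c}" using b by (auto intro: span_base)
  then have "card {rep b, rep a, rep c} = 3" using independent_reps(2)[OF assms(2)] by simp
  ultimately have "dim (span {rep b, rep a, rep c}) = 3"
    by (simp add: dim_span_eq_card_independent del: dim_span)
  then show False
    using assms(1) by (simp add: collinear3_def psp_eq_span_rep insert_commute)
qed

lemma coplanar4_if_relation_first:
  assumes v: "v1 \<in> ppoint_space x1" "v2 \<in> ppoint_space x2" "v3 \<in> ppoint_space x3"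
      "v4 \<in> ppoint_space x4"
    and rel: "c1 *\<^sub>R v1 + c2 *\<^sub>R v2 + c3 *\<^sub>R v3 + c4 *\<^sub>R v4 = 0"
    and nz: "c1 *\<^sub>R v1 \<noteq> 0"
  shows "coplanar4 x1 x2 x3 x4"
proof -
  from nz have "c1 \<noteq> 0" "v1 \<noteq> 0" by auto
  have "v1 = (- 1 / c1) *\<^sub>R (c2 *\<^sub>R v2 + c3 *\<^sub>R v3 + c4 *\<^sub>R v4)"
    by (rule eq_scaleR_if_add_eq_0[OF \<open>c1 \<noteq> 0\<close>]) (use rel in \<open>simp add: algebra_simps\<close>)
  moreover have "v2 \<in> psp {x2, x3, x4}" "v3 \<in> psp {x2, x3, x4}" "v4 \<in> psp {x2, x3, x4}"
    using v by (auto intro: in_psp)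
  ultimately have "v1 \<in> psp {x2, x3, x4}" unfolding psp_def by (simp add: span_add span_scale span_neg)
  then have "rep x1 \<in> psp {x2, x3, x4}" by (rule rep_in_psp[OF \<open>v1 \<noteq> 0\<close> v(1)])
  then show ?thesis
    by (simp add: coplanar4_def psp_eq_span_rep span_redundant dim_three_le)
qed

lemma coplanar4_if_relation:
  assumes v: "v1 \<in> ppoint_space x1" "v2 \<in> ppoint_space x2" "v3 \<in> ppoint_space x3"
      "v4 \<in> ppoint_space x4"
    and rel: "c1 *\<^sub>R v1 + c2 *\<^sub>R v2 + c3 *\<^sub>R v3 + c4 *\<^sub>R v4 = 0"
    and nz: "c1 *\<^sub>R v1 \<noteq> 0 \<or> c2 *\<^sub>R v2 \<noteq> 0 \<or> c3 *\<^sub>R v3 \<noteq> 0 \<or> c4 *\<^sub>R v4 \<noteq> 0"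
  shows "coplanar4 x1 x2 x3 x4"
  using nz
proof (elim disjE)
  assume "c1 *\<^sub>R v1 \<noteq> 0"
  then show ?thesis by (rule coplanar4_if_relation_first[OF v rel])
next
  assume h: "c2 *\<^sub>R v2 \<noteq> 0"
  have "coplanar4 x2 x1 x3 x4"
    by (rule coplanar4_if_relation_first[OF v(2,1,3,4) _ h, of c1 c3 c4])
      (use rel in \<open>simp add: algebra_simps\<close>)
  then show ?thesis by (simp add: coplanar4_def insert_commute)
next
  assume h: "c3 *\<^sub>R v3 \<noteq> 0"
  have "coplanar4 x3 x1 x2 x4"
    by (rule coplanar4_if_relation_first[OF v(3,1,2,4) _ h, of c1 c2 c4])
      (use rel in \<open>simp add: algebra_simps\<close>)
  then show ?thesis by (simp add: coplanar4_def insert_commute)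
next
  assume h: "c4 *\<^sub>R v4 \<noteq> 0"
  have "coplanar4 x4 x1 x2 x3"
    by (rule coplanar4_if_relation_first[OF v(4,1,2,3) _ h, of c1 c2 c3])
      (use rel in \<open>simp add: algebra_simps\<close>)
  then show ?thesis by (simp add: coplanar4_def insert_commute)
qed

lemma coplanar4_if_eq: "x1 = x2 \<or> x1 = x4 \<Longrightarrow> coplanar4 x1 x2 x3 x4"
  by (auto simp: coplanar4_def psp_eq_span_rep insert_commute dim_three_le)

lemma rep_in_plane_if_coplanar4:
  assumes "dim (psp {a, b, c}) = 3" "coplanar4 a b c h"
  shows "rep h \<in> psp {a, b, c}"
proof -
  have "span {rep a, rep b, rep c} = span {rep a, rep b, rep c, rep h}"
    using assms by (intro dim_eq_span) (auto simp: coplanar4_def psp_eq_span_rep span_mono)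
  then show ?thesis by (simp add: psp_eq_span_rep span_base)
qed

lemma eq_if_reps_in_dim_le1:
  assumes "rep x \<in> I" "rep y \<in> I" "dim I \<le> 1"
  shows "x = y"
proof (rule ccontr)
  assume "x \<noteq> y"
  then have "card {rep x, rep y} \<le> dim I"
    using assms(1,2) independent_reps(1) by (intro independent_card_le_dim) auto
  then show False using assms(3) independent_reps(2)[OF \<open>x \<noteq> y\<close>] by simp
qed

lemma collinear3_lift:
  assumes "collinear3 P0 P1 Y" "Yv \<in> ppoint_space Y" "Yv \<noteq> 0" "P0 = P1 \<longrightarrow> P0 = Y"
  shows "\<exists>a. a \<in> ppoint_space P0 \<and> a + Yv \<in> ppoint_space P1"
proof (cases "P0 = Y")
  case True
  then show ?thesis
    using assms(2) scaleR_in_ppoint_space[of Yv Y "- 1"] zero_in_ppoint_space[of P1]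
    by (intro exI[of _ "- Yv"]) simp
next
  case False
  with assms(4) have "P0 \<noteq> P1" by auto
  obtain s t where st: "rep P1 = s *\<^sub>R rep P0 + t *\<^sub>R rep Y"
    using collinear3_rep_in_span[OF assms(1) False] by (rule span_pair_E)
  obtain m where m: "Yv = m *\<^sub>R rep Y"
    using assms(2) by (auto simp: ppoint_space_eq_span_rep span_singleton)
  have "t \<noteq> 0"
  proof
    assume "t = 0"
    then have "rep P1 \<in> ppoint_space P0"
      using st scaleR_in_ppoint_space[OF rep_in_ppoint_space] by simp
    then show False
      using rp3_eqI[OF rep_nonzero _ rep_in_ppoint_space] \<open>P0 \<noteq> P1\<close> by metis
  qed
  then have "(s * m / t) *\<^sub>R rep P0 + Yv = (m / t) *\<^sub>R rep P1"
    using st m by (simp add: algebra_simps)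
  then show ?thesis
    using scaleR_in_ppoint_space[OF rep_in_ppoint_space] by metis
qed

text \<open>The scalings are read off from y1 on x00 x10 and y2 on x00 x01; the other two incidences
  then force U + Y1 + Y2 onto both lines through x11.\<close>

lemma laplace_frame:
  assumes nd: "\<not> collinear3 x10 x11 x01"
    and y1: "on_line y1 x00 x10" "on_line y1 x01 x11"
    and y2: "on_line y2 x00 x01" "on_line y2 x10 x11"
  obtains U Y1 Y2 where "U \<in> ppoint_space x00" "U \<noteq> 0" "Y1 \<in> ppoint_space y1" "Y1 \<noteq> 0"
    "Y2 \<in> ppoint_space y2" "Y2 \<noteq> 0" "U + Y1 \<in> ppoint_space x10" "U + Y2 \<in> ppoint_space x01"
    "U + Y1 + Y2 \<in> ppoint_space x11"
proof -
  define u0 u1 u2 u3 where "u0 = rep x00" "u1 = rep x10" "u2 = rep x01" "u3 = rep x11"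
  have tri: "\<not> dim (span {u2, u1, u3}) \<le> 2"
    using nd by (simp add: collinear3_def psp_eq_span_rep u0_u1_u2_u3_def insert_commute)
  have u1: "u1 \<notin> span {u2, u3}" and u2: "u2 \<notin> span {u1, u3}"
    using tri dim_span_three_le2_if_mem by (metis insert_commute)+
  have w1: "rep y1 \<in> span {u0, u1}" "rep y1 \<in> span {u2, u3}"
    and w2: "rep y2 \<in> span {u0, u2}" "rep y2 \<in> span {u1, u3}"
    using y1 y2 rep_in_ppoint_space
    by (auto simp: on_line_def psp_eq_span_rep u0_u1_u2_u3_def)
  obtain \<alpha> \<beta> where w1e: "rep y1 = \<alpha> *\<^sub>R u0 + \<beta> *\<^sub>R u1" "\<alpha> \<noteq> 0"
    using span_pair_first_coeff_nonzero[OF w1(1) rep_nonzero w1(2) subspace_span u1] .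
  obtain \<alpha>' \<beta>' where w2e: "rep y2 = \<alpha>' *\<^sub>R u0 + \<beta>' *\<^sub>R u2" "\<alpha>' \<noteq> 0"
    using span_pair_first_coeff_nonzero[OF w2(1) rep_nonzero w2(2) subspace_span u2] .
  define U Y1 Y2 where "U = (- \<alpha>) *\<^sub>R u0" "Y1 = rep y1" "Y2 = (\<alpha> / \<alpha>') *\<^sub>R rep y2"
  have UY1: "U + Y1 = \<beta> *\<^sub>R u1"
    by (simp add: U_Y1_Y2_def w1e)
  have UY2: "U + Y2 = (\<alpha> * \<beta>' / \<alpha>') *\<^sub>R u2"
    using w2e(2) by (simp add: U_Y1_Y2_def w2e(1) algebra_simps)
  have "U + Y1 + Y2 = rep y1 + (\<alpha> * \<beta>' / \<alpha>') *\<^sub>R u2"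
    unfolding UY2[symmetric] by (simp add: U_Y1_Y2_def algebra_simps)
  then have "U + Y1 + Y2 \<in> span {u2, u3}"
    using w1(2) by (simp add: span_add span_scale span_base)
  moreover have "U + Y1 + Y2 = (\<alpha> / \<alpha>') *\<^sub>R rep y2 + \<beta> *\<^sub>R u1"
    unfolding UY1[symmetric] by (simp add: U_Y1_Y2_def algebra_simps)
  then have "U + Y1 + Y2 \<in> span {u1, u3}"
    using w2(2) by (simp add: span_add span_scale span_base)
  ultimately have "U + Y1 + Y2 \<in> span {u3}" by (rule span_pair_inter[OF tri])
  then show ?thesis
  proof (intro that)
    show "U \<in> ppoint_space x00"
      unfolding U_Y1_Y2_def u0_u1_u2_u3_def by (rule scaleR_in_ppoint_space[OF rep_in_ppoint_space])
    show "U + Y1 \<in> ppoint_space x10" "U + Y2 \<in> ppoint_space x01"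
      unfolding UY1 UY2 by (simp_all add: U_Y1_Y2_def u0_u1_u2_u3_def
        scaleR_in_ppoint_space rep_in_ppoint_space)
    show "Y1 \<in> ppoint_space y1" "Y2 \<in> ppoint_space y2"
      by (simp_all add: U_Y1_Y2_def scaleR_in_ppoint_space rep_in_ppoint_space)
    show "U \<noteq> 0" "Y1 \<noteq> 0" "Y2 \<noteq> 0"
      using w1e(2) w2e(2) rep_nonzero by (simp_all add: U_Y1_Y2_def u0_u1_u2_u3_def)
  qed (simp add: u0_u1_u2_u3_def ppoint_space_eq_span_rep)
qed

lemma rectangle_has_nonzero_corner:
  fixes G :: "nat \<Rightarrow> nat \<Rightarrow> 'a::zero"
  assumes interior: "\<And>k l. 0 < k \<Longrightarrow> k < N \<Longrightarrow> 0 < l \<Longrightarrow> l < N \<Longrightarrow> G k l \<noteq> 0"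
    and rows: "\<And>k. k \<le> N \<Longrightarrow> G k 0 \<noteq> 0 \<or> G k N \<noteq> 0"
    and cols: "\<And>l. l \<le> N \<Longrightarrow> G 0 l \<noteq> 0 \<or> G N l \<noteq> 0"
    and ij: "i0 \<le> N" "i1 \<le> N" "j0 \<le> N" "j1 \<le> N" "i0 \<noteq> i1" "j0 \<noteq> j1"
  shows "G i0 j0 \<noteq> 0 \<or> G i0 j1 \<noteq> 0 \<or> G i1 j1 \<noteq> 0 \<or> G i1 j0 \<noteq> 0"
proof (rule ccontr)
  assume "\<not> ?thesis"
  then have z: "G i0 j0 = 0" "G i0 j1 = 0" "G i1 j1 = 0" "G i1 j0 = 0" by auto
  have "i0 \<in> {0, N} \<and> i1 \<in> {0, N} \<or> j0 \<in> {0, N} \<and> j1 \<in> {0, N}"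
    using interior[of i0 j0] interior[of i0 j1] interior[of i1 j0] interior[of i1 j1] z ij
    by fastforce
  then show False
  proof
    assume "i0 \<in> {0, N} \<and> i1 \<in> {0, N}"
    then show False using cols[OF ij(3)] z ij(5) by auto
  next
    assume "j0 \<in> {0, N} \<and> j1 \<in> {0, N}"
    then show False using rows[OF ij(1)] z ij(6) by auto
  qed
qed

lemma multi_Q_net_rep_in_corner_plane:
  assumes "multi_Q_net N g" "k \<le> N" "l \<le> N" "i \<le> N" "j \<le> N" "i \<noteq> k" "j \<noteq> l"
    and "dim (psp {g k j, g i j, g i l}) = 3"
  shows "rep (g k l) \<in> psp {g k j, g i j, g i l}"
proof -
  have "coplanar4 (g k j) (g k l) (g i l) (g i j)"
    using assms(1-7) unfolding multi_Q_net_def by metis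
  then have "coplanar4 (g k j) (g i j) (g i l) (g k l)"
    by (simp add: coplanar4_def insert_commute)
  then show ?thesis by (rule rep_in_plane_if_coplanar4[OF assms(8)])
qed

lemma multi_Q_net_unique:
  assumes g: "multi_Q_net N g" and h: "multi_Q_net N h"
    and rows: "\<And>k. k \<le> N \<Longrightarrow> h k 0 = g k 0 \<and> h k N = g k N"
    and cols: "\<And>l. l \<le> N \<Longrightarrow> h 0 l = g 0 l \<and> h N l = g N l"
    and planes: "\<And>k l. 0 < k \<Longrightarrow> k < N \<Longrightarrow> 0 < l \<Longrightarrow> l < N \<Longrightarrow>
        dim (psp {g k 0, g 0 0, g 0 l}) = 3 \<and> dim (psp {g k N, g 0 N, g 0 l}) = 3 \<and>
        dim (psp {g k 0, g N 0, g N l}) = 3 \<and> dim (psp {g k N, g N N, g N l}) = 3 \<and>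
        dim (psp {g k 0, g 0 0, g 0 l} \<inter> psp {g k N, g 0 N, g 0 l} \<inter>
             psp {g k 0, g N 0, g N l} \<inter> psp {g k N, g N N, g N l}) \<le> 1"
    and kl: "k \<le> N" "l \<le> N"
  shows "h k l = g k l"
proof (cases "0 < k \<and> k < N \<and> 0 < l \<and> l < N")
  case False
  then have "k = 0 \<or> k = N \<or> l = 0 \<or> l = N" using kl by linarith
  then show ?thesis using rows cols kl by auto
next
  case True
  then have kl': "0 < k" "k < N" "0 < l" "l < N" by auto
  let ?I = "psp {g k 0, g 0 0, g 0 l} \<inter> psp {g k N, g 0 N, g 0 l} \<inter>
            psp {g k 0, g N 0, g N l} \<inter> psp {g k N, g N N, g N l}"
  note pl = planes[OF kl']
  have in_I: "rep (f k l) \<in> ?I"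
    if f: "multi_Q_net N f" and "f k 0 = g k 0" "f k N = g k N" "f 0 l = g 0 l" "f N l = g N l"
      "f 0 0 = g 0 0" "f 0 N = g 0 N" "f N 0 = g N 0" "f N N = g N N" for f
    using multi_Q_net_rep_in_corner_plane[OF f, of k l 0 0]
      multi_Q_net_rep_in_corner_plane[OF f, of k l 0 N]
      multi_Q_net_rep_in_corner_plane[OF f, of k l N 0]
      multi_Q_net_rep_in_corner_plane[OF f, of k l N N] kl kl' pl that(2-)
    by auto
  have "rep (h k l) \<in> ?I"
    by (rule in_I[OF h]) (use rows[of k] rows[of 0] rows[of N] cols[of l] kl kl' in auto)
  moreover have "rep (g k l) \<in> ?I" by (rule in_I[OF g]) simp_all
  ultimately show ?thesis by (rule eq_if_reps_in_dim_le1) (use pl in simp)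
qed

locale laplace_extension =
  fixes N :: nat and x00 x10 x11 x01 y1 y2 :: rp3 and p0 p1 q0 q1 :: "nat \<Rightarrow> rp3"
    and U Y1 Y2 :: "real^4"
  assumes N_pos: "0 < N"
    and ends: "p0 0 = x00" "p0 N = x10" "p1 0 = x01" "p1 N = x11"
      "q0 0 = x00" "q0 N = x01" "q1 0 = x10" "q1 N = x11"
    and pcol: "\<And>k. k \<le> N \<Longrightarrow> collinear3 (p0 k) (p1 k) y2"
    and qcol: "\<And>l. l \<le> N \<Longrightarrow> collinear3 (q0 l) (q1 l) y1"
    and planes: "\<And>k l. 0 < k \<Longrightarrow> k < N \<Longrightarrow> 0 < l \<Longrightarrow> l < N \<Longrightarrow>
        dim (psp {p0 k, x00, q0 l}) = 3 \<and> dim (psp {p1 k, x01, q0 l}) = 3 \<and>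
        dim (psp {p0 k, x10, q1 l}) = 3 \<and> dim (psp {p1 k, x11, q1 l}) = 3 \<and>
        dim (psp {p0 k, x00, q0 l} \<inter> psp {p1 k, x01, q0 l} \<inter>
             psp {p0 k, x10, q1 l} \<inter> psp {p1 k, x11, q1 l}) \<le> 1"
    and frame: "U \<in> ppoint_space x00" "U \<noteq> 0" "Y1 \<in> ppoint_space y1" "Y1 \<noteq> 0"
      "Y2 \<in> ppoint_space y2" "Y2 \<noteq> 0" "U + Y1 \<in> ppoint_space x10"
      "U + Y2 \<in> ppoint_space x01" "U + Y1 + Y2 \<in> ppoint_space x11"
begin

text \<open>Rows are lifted by row_vec (a_k above) and columns by col_vec (b_l). A row with
  p0 k = p1 k \<noteq> y2 admits no lift a_k; it is made constant p0 k by the weight row_wt k = 0,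
  and degenerate columns likewise. The relation on rectangles survives these weights.\<close>

definition degenerate_row :: "nat \<Rightarrow> bool" where
  "degenerate_row k \<longleftrightarrow> 0 < k \<and> k < N \<and> p0 k = p1 k \<and> p0 k \<noteq> y2"

definition degenerate_col :: "nat \<Rightarrow> bool" where
  "degenerate_col l \<longleftrightarrow> 0 < l \<and> l < N \<and> q0 l = q1 l \<and> q0 l \<noteq> y1"

definition row_vec :: "nat \<Rightarrow> real^4" where
  "row_vec k = (if k = 0 then U else if k = N then U + Y1
     else if degenerate_row k then rep (p0 k)
     else SOME a. a \<in> ppoint_space (p0 k) \<and> a + Y2 \<in> ppoint_space (p1 k))"

definition col_vec :: "nat \<Rightarrow> real^4" where
  "col_vec l = (if l = 0 then 0 else if l = N then Y2
     else if degenerate_col l then rep (q0 l)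
     else (SOME c. c \<in> ppoint_space (q0 l) \<and> c + Y1 \<in> ppoint_space (q1 l)) - U)"

definition row_wt :: "nat \<Rightarrow> real" where
  "row_wt k = (if degenerate_row k then 0 else 1)"

definition col_wt :: "nat \<Rightarrow> real" where
  "col_wt l = (if degenerate_col l then 0 else 1)"

definition lift :: "nat \<Rightarrow> nat \<Rightarrow> real^4" where
  "lift k l = col_wt l *\<^sub>R row_vec k + row_wt k *\<^sub>R col_vec l"

definition net :: "nat \<Rightarrow> nat \<Rightarrow> rp3" where
  "net k l = (if l = 0 then p0 k else if l = N then p1 k
     else if k = 0 then q0 l else if k = N then q1 l else point_of (lift k l))"

lemma row_vec_degenerate: "degenerate_row k \<Longrightarrow> row_vec k = rep (p0 k)"
  by (auto simp: row_vec_def degenerate_row_def)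

lemma col_vec_degenerate: "degenerate_col l \<Longrightarrow> col_vec l = rep (q0 l)"
  by (auto simp: col_vec_def degenerate_col_def)

lemma wt_ends [simp]: "row_wt 0 = 1" "row_wt N = 1" "col_wt 0 = 1" "col_wt N = 1"
  by (simp_all add: row_wt_def col_wt_def degenerate_row_def degenerate_col_def)

lemma vec_ends [simp]: "row_vec 0 = U" "row_vec N = U + Y1" "col_vec 0 = 0" "col_vec N = Y2"
  using N_pos by (simp_all add: row_vec_def col_vec_def)

lemma row_vec_lifts:
  assumes "k \<le> N" "\<not> degenerate_row k"
  shows "row_vec k \<in> ppoint_space (p0 k) \<and> row_vec k + Y2 \<in> ppoint_space (p1 k)"
proof (cases "k = 0 \<or> k = N")
  case True
  then show ?thesis using frame ends by auto
next
  case False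
  have "\<exists>a. a \<in> ppoint_space (p0 k) \<and> a + Y2 \<in> ppoint_space (p1 k)"
    by (rule collinear3_lift[OF pcol[OF assms(1)] frame(5,6)])
      (use assms False in \<open>auto simp: degenerate_row_def\<close>)
  from someI_ex[OF this] show ?thesis using False assms(2) by (simp add: row_vec_def)
qed

lemma col_vec_lifts:
  assumes "l \<le> N" "\<not> degenerate_col l"
  shows "U + col_vec l \<in> ppoint_space (q0 l) \<and> U + Y1 + col_vec l \<in> ppoint_space (q1 l)"
proof (cases "l = 0 \<or> l = N")
  case True
  then show ?thesis using frame ends by (auto simp: algebra_simps)
next
  case False
  have "\<exists>c. c \<in> ppoint_space (q0 l) \<and> c + Y1 \<in> ppoint_space (q1 l)"
    by (rule collinear3_lift[OF qcol[OF assms(1)] frame(3,4)])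
      (use assms False in \<open>auto simp: degenerate_col_def\<close>)
  from someI_ex[OF this] show ?thesis
    using False assms(2) by (simp add: col_vec_def algebra_simps)
qed

lemma row_vec_in_p0: "k \<le> N \<Longrightarrow> row_vec k \<in> ppoint_space (p0 k)"
  using row_vec_lifts row_vec_degenerate rep_in_ppoint_space by metis

text \<open>A degenerate row and a degenerate column would meet in p0 k and in q0 l, which then would
  both lie on all four planes of the general position assumption.\<close>

lemma not_degenerate_row_and_col:
  assumes "degenerate_row k" "degenerate_col l"
  shows False
proof -
  have kl: "0 < k" "k < N" "0 < l" "l < N" and P: "p1 k = p0 k" and Q: "q1 l = q0 l"
    using assms by (auto simp: degenerate_row_def degenerate_col_def)
  note pl = planes[OF kl, unfolded P Q]
  let ?I = "psp {p0 k, x00, q0 l} \<inter> psp {p0 k, x01, q0 l} \<inter> psp {p0 k, x10, q0 l} \<inter>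
            psp {p0 k, x11, q0 l}"
  have "rep (p0 k) \<in> ?I" "rep (q0 l) \<in> ?I" by (auto intro!: in_psp rep_in_ppoint_space)
  then have "p0 k = q0 l" by (rule eq_if_reps_in_dim_le1) (use pl in simp)
  then have "dim (psp {p0 k, x00, q0 l}) \<le> 2"
    by (simp add: psp_eq_span_rep insert_commute dim_two_le)
  then show False using pl by simp
qed

lemma lift_nonzero:
  assumes kl: "0 < k" "k < N" "0 < l" "l < N"
  shows "lift k l \<noteq> 0"
proof (cases "degenerate_row k \<or> degenerate_col l")
  case True
  then show ?thesis
    using not_degenerate_row_and_col row_vec_degenerate col_vec_degenerate rep_nonzero
    by (auto simp: lift_def row_wt_def col_wt_def)
next
  case False
  show ?thesis
  proof
    assume "lift k l = 0"
    then have sum: "row_vec k + col_vec l = 0" using False by (simp add: lift_def row_wt_def col_wt_def)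
    have "row_vec k \<in> psp {p0 k, q0 l}" "U + col_vec l \<in> psp {p0 k, q0 l}"
      using row_vec_in_p0[of k] col_vec_lifts[of l] False kl by (auto intro: in_psp)
    moreover have "U = (U + col_vec l) + row_vec k"
      using sum by (simp add: algebra_simps eq_neg_iff_add_eq_0)
    ultimately have "U \<in> psp {p0 k, q0 l}" unfolding psp_def by (metis span_add)
    then have "rep x00 \<in> psp {p0 k, q0 l}" by (rule rep_in_psp[OF frame(2,1)])
    then have "rep x00 \<in> span {rep (p0 k), rep (q0 l)}" by (simp add: psp_eq_span_rep)
    then have "dim (span {rep x00, rep (p0 k), rep (q0 l)}) \<le> 2"
      by (rule dim_span_three_le2_if_mem)
    then show False using planes[OF kl] by (simp add: psp_eq_span_rep insert_commute)
  qed
qed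

lemma lift_in_net:
  assumes kl: "k \<le> N" "l \<le> N"
  shows "lift k l \<in> ppoint_space (net k l)"
proof -
  consider "l = 0" | "l = N" "l \<noteq> 0" | "k = 0" "0 < l" "l < N" | "k = N" "k \<noteq> 0" "0 < l" "l < N"
    | "0 < k" "k < N" "0 < l" "l < N"
    using kl by linarith
  then show ?thesis
  proof cases
    case 1
    then show ?thesis using row_vec_in_p0[OF kl(1)] by (simp add: lift_def net_def)
  next
    case 2
    then show ?thesis
      using row_vec_lifts[OF kl(1)] row_vec_degenerate[of k] rep_in_ppoint_space[of "p0 k"]
      by (cases "degenerate_row k") (auto simp: lift_def net_def row_wt_def degenerate_row_def)
  next
    case 3
    then show ?thesis
      using col_vec_lifts[OF kl(2)] col_vec_degenerate[of l] rep_in_ppoint_space[of "q0 l"]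
      by (cases "degenerate_col l") (auto simp: lift_def net_def col_wt_def add.commute)
  next
    case 4
    then show ?thesis
      using col_vec_lifts[OF kl(2)] col_vec_degenerate[of l] rep_in_ppoint_space[of "q0 l"]
      by (cases "degenerate_col l")
        (auto simp: lift_def net_def col_wt_def degenerate_col_def algebra_simps)
  next
    case 5
    then show ?thesis
      using lift_nonzero[OF 5] by (simp add: net_def ppoint_space_point_of span_base)
  qed
qed


lemma lift_row_ends_nonzero: "lift k 0 \<noteq> 0 \<or> lift k N \<noteq> 0"
  using row_vec_degenerate[of k] rep_nonzero[of "p0 k"] frame(6)
  by (cases "degenerate_row k") (auto simp: lift_def row_wt_def)

lemma lift_col_ends_nonzero: "lift 0 l \<noteq> 0 \<or> lift N l \<noteq> 0"
proof (rule ccontr)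
  assume "\<not> ?thesis"
  moreover have "lift N l - lift 0 l = col_wt l *\<^sub>R Y1" by (simp add: lift_def algebra_simps)
  ultimately have "degenerate_col l" using frame(4) by (auto simp: col_wt_def split: if_splits)
  with \<open>\<not> ?thesis\<close> show False
    using col_vec_degenerate rep_nonzero by (simp add: lift_def col_wt_def)
qed

lemma net_degenerate_row: "degenerate_row k \<Longrightarrow> net k l = p0 k"
  using not_degenerate_row_and_col[of k l] row_vec_degenerate[of k]
  by (auto simp: net_def lift_def row_wt_def col_wt_def point_of_rep degenerate_row_def)

lemma net_degenerate_col: "degenerate_col l \<Longrightarrow> net k l = q0 l"
  using not_degenerate_row_and_col[of k l] col_vec_degenerate[of l] ends
  by (auto simp: net_def lift_def row_wt_def col_wt_def point_of_rep degenerate_col_def)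

lemma lift_rectangle_relation:
  "(col_wt j1 * row_wt i1) *\<^sub>R lift i0 j0 + (- (col_wt j0 * row_wt i1)) *\<^sub>R lift i0 j1
   + (col_wt j0 * row_wt i0) *\<^sub>R lift i1 j1 + (- (col_wt j1 * row_wt i0)) *\<^sub>R lift i1 j0 = 0"
  by (simp add: lift_def algebra_simps)

lemma lift_rectangle_relation_nontrivial:
  assumes ij: "i0 \<le> N" "i1 \<le> N" "j0 \<le> N" "j1 \<le> N" "i0 \<noteq> i1" "j0 \<noteq> j1"
    and rows: "\<not> (degenerate_row i0 \<and> degenerate_row i1)"
    and cols: "\<not> (degenerate_col j0 \<and> degenerate_col j1)"
  shows "(col_wt j1 * row_wt i1) *\<^sub>R lift i0 j0 \<noteq> 0 \<or> (- (col_wt j0 * row_wt i1)) *\<^sub>R lift i0 j1 \<noteq> 0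
    \<or> (col_wt j0 * row_wt i0) *\<^sub>R lift i1 j1 \<noteq> 0 \<or> (- (col_wt j1 * row_wt i0)) *\<^sub>R lift i1 j0 \<noteq> 0"
proof -
  note defs = lift_def row_wt_def col_wt_def
  note no_both = not_degenerate_row_and_col
  consider "degenerate_row i0" | "degenerate_row i1" | "degenerate_col j0" | "degenerate_col j1"
    | "\<not> degenerate_row i0" "\<not> degenerate_row i1" "\<not> degenerate_col j0" "\<not> degenerate_col j1"
    by blast
  then show ?thesis
  proof cases
    case 1
    then show ?thesis using rows no_both row_vec_degenerate rep_nonzero by (auto simp: defs)
  next
    case 2
    then show ?thesis using rows no_both row_vec_degenerate rep_nonzero by (auto simp: defs)
  next
    case 3
    then show ?thesis using cols no_both col_vec_degenerate rep_nonzero by (auto simp: defs)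
  next
    case 4
    then show ?thesis using cols no_both col_vec_degenerate rep_nonzero by (auto simp: defs)
  next
    case 5
    have "lift i0 j0 \<noteq> 0 \<or> lift i0 j1 \<noteq> 0 \<or> lift i1 j1 \<noteq> 0 \<or> lift i1 j0 \<noteq> 0"
      using lift_nonzero lift_row_ends_nonzero lift_col_ends_nonzero ij
      by (rule rectangle_has_nonzero_corner)
    with 5 show ?thesis by (simp add: row_wt_def col_wt_def)
  qed
qed

lemma multi_Q_net_net: "multi_Q_net N net"
  unfolding multi_Q_net_def
proof (intro allI impI, elim conjE)
  fix i0 i1 j0 j1
  assume ij: "i0 \<le> N" "i1 \<le> N" "j0 \<le> N" "j1 \<le> N" "i0 \<noteq> i1" "j0 \<noteq> j1"
  show "coplanar4 (net i0 j0) (net i0 j1) (net i1 j1) (net i1 j0)"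
  proof (cases "degenerate_row i0 \<and> degenerate_row i1 \<or> degenerate_col j0 \<and> degenerate_col j1")
    case True
    then show ?thesis by (auto simp: net_degenerate_row net_degenerate_col intro: coplanar4_if_eq)
  next
    case False
    then show ?thesis
      using lift_rectangle_relation_nontrivial[OF ij]
      by (intro coplanar4_if_relation[OF lift_in_net[OF ij(1,3)] lift_in_net[OF ij(1,4)]
          lift_in_net[OF ij(2,4)] lift_in_net[OF ij(2,3)] lift_rectangle_relation]) auto
  qed
qed

lemma net_boundary: "net k 0 = p0 k" "net k N = p1 k" "net 0 l = q0 l" "net N l = q1 l"
  using N_pos ends by (auto simp: net_def)

lemma net_planes:
  assumes "0 < k" "k < N" "0 < l" "l < N"
  shows "dim (psp {net k 0, net 0 0, net 0 l}) = 3 \<and> dim (psp {net k N, net 0 N, net 0 l}) = 3 \<and>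
    dim (psp {net k 0, net N 0, net N l}) = 3 \<and> dim (psp {net k N, net N N, net N l}) = 3 \<and>
    dim (psp {net k 0, net 0 0, net 0 l} \<inter> psp {net k N, net 0 N, net 0 l} \<inter>
         psp {net k 0, net N 0, net N l} \<inter> psp {net k N, net N N, net N l}) \<le> 1"
  using planes[OF assms] by (simp add: net_boundary ends)

end

theorem proposition8p1:
  fixes N :: nat
    and x00 x10 x11 x01 y1 y2 :: rp3
    and p0 p1 q0 q1 :: "nat \<Rightarrow> rp3"
  assumes N2: "N \<ge> 2"
    and planar: "coplanar4 x00 x10 x11 x01"
    and y1: "on_line y1 x00 x10" "on_line y1 x01 x11"
    and y2: "on_line y2 x00 x01" "on_line y2 x10 x11"
    and ends: "p0 0 = x00" "p0 N = x10" "p1 0 = x01" "p1 N = x11"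
              "q0 0 = x00" "q0 N = x01" "q1 0 = x10" "q1 N = x11"
    and pcol: "\<forall>k \<le> N. collinear3 (p0 k) (p1 k) y2"
    and qcol: "\<forall>l \<le> N. collinear3 (q0 l) (q1 l) y1"
    and gp: "gen_pos_data N x00 x10 x11 x01 p0 p1 q0 q1"
  shows "\<exists>f. multi_Q_net N f
            \<and> (\<forall>k \<le> N. f k 0 = p0 k \<and> f k N = p1 k)
            \<and> (\<forall>l \<le> N. f 0 l = q0 l \<and> f N l = q1 l)
            \<and> (\<forall>g. multi_Q_net N g
                   \<and> (\<forall>k \<le> N. g k 0 = p0 k \<and> g k N = p1 k)
                   \<and> (\<forall>l \<le> N. g 0 l = q0 l \<and> g N l = q1 l)
                   \<longrightarrow> (\<forall>k \<le> N. \<forall>l \<le> N. g k l = f k l))"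
proof -
  have nd: "\<not> collinear3 x10 x11 x01"
    using gp by (simp add: gen_pos_data_def quad_nondegenerate_def)
  have planes: "\<And>k l. 0 < k \<Longrightarrow> k < N \<Longrightarrow> 0 < l \<Longrightarrow> l < N \<Longrightarrow>
        dim (psp {p0 k, x00, q0 l}) = 3 \<and> dim (psp {p1 k, x01, q0 l}) = 3 \<and>
        dim (psp {p0 k, x10, q1 l}) = 3 \<and> dim (psp {p1 k, x11, q1 l}) = 3 \<and>
        dim (psp {p0 k, x00, q0 l} \<inter> psp {p1 k, x01, q0 l} \<inter>
             psp {p0 k, x10, q1 l} \<inter> psp {p1 k, x11, q1 l}) \<le> 1"
    using gp unfolding gen_pos_data_def by blast
  obtain U Y1 Y2 where frame: "U \<in> ppoint_space x00" "U \<noteq> 0" "Y1 \<in> ppoint_space y1" "Y1 \<noteq> 0"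
    "Y2 \<in> ppoint_space y2" "Y2 \<noteq> 0" "U + Y1 \<in> ppoint_space x10"
    "U + Y2 \<in> ppoint_space x01" "U + Y1 + Y2 \<in> ppoint_space x11"
    using laplace_frame[OF nd y1 y2] .
  interpret laplace_extension N x00 x10 x11 x01 y1 y2 p0 p1 q0 q1 U Y1 Y2
  proof
    show "0 < N" using N2 by simp
  qed (use ends pcol qcol planes frame in blast)+
  have "g k l = net k l"
    if "multi_Q_net N g" "\<forall>k \<le> N. g k 0 = p0 k \<and> g k N = p1 k"
      "\<forall>l \<le> N. g 0 l = q0 l \<and> g N l = q1 l" "k \<le> N" "l \<le> N" for g k l
    by (rule multi_Q_net_unique[OF multi_Q_net_net that(1) _ _ net_planes that(4,5)])
      (use that in \<open>simp_all add: net_boundary\<close>)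
  moreover have "multi_Q_net N net \<and> (\<forall>k \<le> N. net k 0 = p0 k \<and> net k N = p1 k)
      \<and> (\<forall>l \<le> N. net 0 l = q0 l \<and> net N l = q1 l)"
    by (simp add: multi_Q_net_net net_boundary)
  ultimately show ?thesis by blast
qed

end
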